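(* Let $\mathcal{X}$ be a finite alphabet and let $P_0,P_1$ be probability mass functions on $\mathcal{X}$ with the same support $\mathcal{X}$. Let $n>1$, $k^\star\in(1,n]$ an integer, and $\mathcal{D}=(x_1,\dots,x_n)$ a random dataset with independent entries, $x_1,\dots,x_{k^\star-1}\sim P_0$ and $x_{k^\star},\dots,x_n\sim P_1$. Let $\hat k\in\arg\max_{k\in[n]}\sum_{i=k}^n\log\frac{P_1(x_i)}{P_0(x_i)}$. Let $s=\max_{x}\log\frac{P_1(x)}{P_0(x)}-\min_{x}\log\frac{P_1(x)}{P_0(x)}$ and $C=\min\{D_{\mathrm{KL}}(P_0\|P_1),D_{\mathrm{KL}}(P_1\|P_0)\}$. Then for every $\alpha\in[n]$, the estimator is $(\alpha,\beta)$-accurate with $$\beta\le 2\min\Big\{\frac{t(1-t^M)}{1-t};\ \exp\big(-\alpha I_{ch}(P_0,P_1)\big)\Big\},$$ where $t=\exp(-\alpha C^2/s^2)$ and $M=\lfloor\frac{n-1}{\alpha}\rfloor$.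
   Context: $[a]=\{1,\dots,a\}$; natural logarithms. $(\alpha,\beta)$-accurate means $\mathbb{P}\{\hat k\notin[k^\star-\alpha,k^\star+\alpha]\}=\beta$ (so the claim bounds this probability). Chernoff information: $I_{ch}(P_0,P_1)=-\min_{\lambda\in(0,1)}\log\big(\sum_{x}P_0(x)^\lambda P_1(x)^{1-\lambda}\big)$. *)

theory Defs
  imports "HOL-Probability.Probability"
begin

definition llr :: "'a pmf \<Rightarrow> 'a pmf \<Rightarrow> 'a \<Rightarrow> real" where
  "llr P0 P1 x = ln (pmf P1 x / pmf P0 x)"

definition KL :: "'a::finite pmf \<Rightarrow> 'a pmf \<Rightarrow> real" where
  "KL P Q = (\<Sum>x\<in>UNIV. pmf P x * ln (pmf P x / pmf Q x))"

(* Chernoff information: - min over lambda in (0,1) of log sum P0^lambda P1^(1-lambda);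
   the minimum is attained, so it equals the infimum *)
definition chernoff_info :: "'a::finite pmf \<Rightarrow> 'a pmf \<Rightarrow> real" where
  "chernoff_info P0 P1 =
     - (INF l\<in>{0<..<1::real}. ln (\<Sum>x\<in>UNIV. pmf P0 x powr l * pmf P1 x powr (1 - l)))"

definition dataset :: "nat \<Rightarrow> nat \<Rightarrow> 'a pmf \<Rightarrow> 'a pmf \<Rightarrow> (nat \<Rightarrow> 'a) pmf" where
  "dataset n kstar P0 P1 = Pi_pmf {1..n} undefined (\<lambda>i. if i < kstar then P0 else P1)"

definition cp_argmax :: "nat \<Rightarrow> 'a pmf \<Rightarrow> 'a pmf \<Rightarrow> (nat \<Rightarrow> 'a) \<Rightarrow> nat set" where
  "cp_argmax n P0 P1 xs =
     {k \<in> {1..n}. \<forall>k'\<in>{1..n}. (\<Sum>i=k'..n. llr P0 P1 (xs i)) \<le> (\<Sum>i=k..n. llr P0 P1 (xs i))}"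

end

theory Submission
  imports Defs
begin

text \<open>
  If \<open>khat > kstar + \<alpha>\<close>, maximality of the suffix sum at \<open>khat\<close> forces the log-likelihood
  ratios of the post-change samples \<open>x\<^bsub>kstar\<^esub>, \<dots>, x\<^bsub>khat-1\<^esub>\<close> to have nonpositive sum; if
  \<open>khat < kstar - \<alpha>\<close>, those of the pre-change samples \<open>x\<^bsub>khat\<^esub>, \<dots>, x\<^bsub>kstar-1\<^esub>\<close> have
  nonnegative sum. In both cases a random walk with i.i.d. increments of negative drift, started
  at \<open>kstar\<close> and running away from it, is nonnegative after some \<open>m > \<alpha>\<close> steps. Conditioning
  on the first increment shows that this has probability at most \<open>\<rho>\<^sup>\<alpha>\<^sup>+\<^sup>1\<close> for every tilt
  \<open>l \<ge> 0\<close> with \<open>\<rho> = E exp(l X) \<le> 1\<close>, without a union bound over \<open>m\<close>.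

  Tilting by \<open>l\<close> after the change and by \<open>1 - l\<close> before it makes both \<open>\<rho>\<close> equal to the
  Chernoff coefficient \<open>\<Sum>x. P\<^sub>0(x)\<^sup>l P\<^sub>1(x)\<^sup>1\<^sup>-\<^sup>l\<close>. The optimal tilt in Hoeffding's lemma instead gives
  \<open>\<rho> \<le> exp(-2C\<^sup>2/s\<^sup>2)\<close>, hence the bound \<open>2t\<close>, which is at most twice \<open>t + \<dots> + t\<^sup>M\<close> once
  \<open>M \<ge> 1\<close>; for \<open>M = 0\<close> the error event is empty.
\<close>

lemma mult_ln_div_gt:
  fixes p q :: real
  assumes "0 < p" "0 < q" "p \<noteq> q"
  shows "p - q < p * ln (p / q)"
proof -
  have "q / p \<noteq> 1" using assms by simp
  then have "ln (q / p) < q / p - 1"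
    using assms ln_le_minus_one[of "q / p"] ln_eq_minus_one[of "q / p"] by fastforce
  then have "p * ln (q / p) < q - p"
    using assms by (simp add: field_simps)
  then show ?thesis
    using assms by (auto simp: ln_div right_diff_distrib)
qed

lemma mult_ln_div_ge:
  fixes p q :: real
  assumes "0 < p" "0 < q"
  shows "p - q \<le> p * ln (p / q)"
  using mult_ln_div_gt[OF assms] by (cases "p = q") auto

lemma KL_pos:
  fixes P Q :: "'a::finite pmf"
  assumes "set_pmf P = UNIV" "set_pmf Q = UNIV" "P \<noteq> Q"
  shows "0 < KL P Q"
proof -
  have pos: "0 < pmf P x" "0 < pmf Q x" for x
    using assms by (auto simp: set_pmf_iff order.strict_iff_not)
  obtain x0 where "pmf P x0 \<noteq> pmf Q x0"
    using assms(3) by (metis pmf_eqI)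
  have "0 = (\<Sum>x\<in>UNIV. pmf P x - pmf Q x)"
    by (simp add: sum_subtractf sum_pmf_eq_1)
  also have "\<dots> < KL P Q"
    unfolding KL_def
  proof (rule sum_strict_mono_ex1)
    show "\<forall>x\<in>UNIV. pmf P x - pmf Q x \<le> pmf P x * ln (pmf P x / pmf Q x)"
      using pos by (simp add: mult_ln_div_ge)
    show "\<exists>x\<in>UNIV. pmf P x - pmf Q x < pmf P x * ln (pmf P x / pmf Q x)"
      using pos \<open>pmf P x0 \<noteq> pmf Q x0\<close> mult_ln_div_gt by blast
  qed simp
  finally show ?thesis .
qed

lemma le_sum_geometric:
  fixes t :: real
  assumes "0 \<le> t" "t < 1" "1 \<le> M"
  shows "t \<le> t * (1 - t ^ M) / (1 - t)"
proof -
  have "t ^ M \<le> t" using assms power_decreasing[of 1 M t] by simp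
  then have "t * (1 - t) \<le> t * (1 - t ^ M)" using assms by (intro mult_left_mono) auto
  then show ?thesis using assms by (simp add: le_divide_eq)
qed

lemma le_exp_mult_INF_ln:
  fixes f :: "'b \<Rightarrow> real"
  assumes "S \<noteq> {}" and le: "\<And>l. l \<in> S \<Longrightarrow> x \<le> f l ^ k" and pos: "\<And>l. l \<in> S \<Longrightarrow> 0 < f l"
  shows "x \<le> exp (real k * (INF l\<in>S. ln (f l)))"
proof (cases "0 < x \<and> 0 < k")
  case True
  have "ln x / real k \<le> (INF l\<in>S. ln (f l))"
  proof (rule cINF_greatest[OF assms(1)])
    fix l assume "l \<in> S"
    then have "ln x \<le> real k * ln (f l)"
      using le pos True by (simp flip: ln_realpow)
    then show "ln x / real k \<le> ln (f l)"
      using True by (simp add: divide_le_eq mult.commute)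
  qed
  then have "ln x \<le> real k * (INF l\<in>S. ln (f l))"
    using True by (simp add: divide_le_eq mult.commute)
  then show ?thesis
    using True by (simp flip: ln_le_cancel_iff)
next
  case False
  moreover obtain l where "l \<in> S" using assms(1) by blast
  ultimately show ?thesis using le[of l] by (auto simp: not_less intro: order_trans[of _ 0])
qed

lemma sum_atLeastLessThan_rev_lessThan:
  fixes f :: "nat \<Rightarrow> 'b::comm_monoid_add"
  assumes "m \<le> n"
  shows "(\<Sum>i=m..<n. f i) = (\<Sum>j<n - m. f (n - 1 - j))"
proof -
  have "(\<Sum>i=m..<n. f i) = (\<Sum>j<n - m. f (m + j))"
    by (simp add: sum.atLeastLessThan_shift_0 atLeast0LessThan)
  also have "\<dots> = (\<Sum>j<n - m. f (m + (n - m - Suc j)))"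
    by (rule sum.nat_diff_reindex[symmetric])
  also have "\<dots> = (\<Sum>j<n - m. f (n - 1 - j))"
    using assms by (intro sum.cong) auto
  finally show ?thesis .
qed

lemma measure_pmf_prob_bind_finite:
  fixes M :: "'a::finite pmf"
  shows "measure_pmf.prob (bind_pmf M N) X = (\<Sum>x\<in>UNIV. pmf M x * measure_pmf.prob (N x) X)"
proof -
  have "measure_pmf.prob (bind_pmf M N) X = (\<integral>x. measure_pmf.prob (N x) X \<partial>M)"
    unfolding measure_pmf_bind
    by (rule measure_pmf.measure_bind[where N="count_space UNIV"])
       (auto simp: measure_pmf_in_subprob_algebra)
  then show ?thesis
    by (simp add: integral_measure_pmf_real[where A=UNIV] mult.commute)
qed

definition mgf :: "'a::finite pmf \<Rightarrow> ('a \<Rightarrow> real) \<Rightarrow> real \<Rightarrow> real" where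
  "mgf Q g u = (\<Sum>x\<in>UNIV. pmf Q x * exp (u * g x))"

lemma mgf_nonneg: "0 \<le> mgf Q g u"
  unfolding mgf_def by (intro sum_nonneg) auto

lemma sum_pmf_exp_shift_eq_mgf:
  "(\<Sum>y\<in>UNIV. pmf Q y * (exp (- l * (c - g y)) * K)) = exp (- l * c) * K * mgf Q g l"
proof -
  have "exp (- l * (c - g y)) = exp (- l * c) * exp (l * g y)" for y
    by (simp add: right_diff_distrib flip: exp_add)
  then show ?thesis
    unfolding mgf_def sum_distrib_left by (intro sum.cong) auto
qed

definition crossing_event ::
    "('b \<Rightarrow> real) \<Rightarrow> (nat \<Rightarrow> 'i) \<Rightarrow> nat \<Rightarrow> nat \<Rightarrow> real \<Rightarrow> ('i \<Rightarrow> 'b) set" where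
  "crossing_event g ix L N c = {xs. \<exists>m. L \<le> m \<and> m \<le> N \<and> c \<le> (\<Sum>j<m. g (xs (ix j)))}"

lemma crossing_event_0: "\<not> (L = 0 \<and> c \<le> 0) \<Longrightarrow> crossing_event g ix L 0 c = {}"
  by (auto simp: crossing_event_def)

lemma crossing_event_fun_upd_subset:
  assumes "inj_on ix {..<Suc N}" "\<not> (L = 0 \<and> c \<le> 0)"
  shows "(\<lambda>f. f(ix 0 := y)) -` crossing_event g ix L (Suc N) c
           \<subseteq> crossing_event g (ix \<circ> Suc) (L - 1) N (c - g y)"
proof
  fix f assume "f \<in> (\<lambda>f. f(ix 0 := y)) -` crossing_event g ix L (Suc N) c"
  then obtain m where m: "L \<le> m" "m \<le> Suc N" "c \<le> (\<Sum>j<m. g ((f(ix 0 := y)) (ix j)))"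
    unfolding crossing_event_def by auto
  with assms(2) obtain m' where m': "m = Suc m'" by (cases m) auto
  have "ix (Suc j) \<noteq> ix 0" if "j < N" for j
    using assms(1) that by (auto simp: inj_on_def)
  then have "(\<Sum>j<m. g ((f(ix 0 := y)) (ix j))) = g y + (\<Sum>j<m'. g (f (ix (Suc j))))"
    unfolding m' sum.lessThan_Suc_shift using m m' by simp
  then show "f \<in> crossing_event g (ix \<circ> Suc) (L - 1) N (c - g y)"
    using m m' unfolding crossing_event_def by (auto intro!: exI[of _ m'])
qed

lemma measure_Pi_pmf_insert:
  fixes p :: "'i \<Rightarrow> 'b::finite pmf"
  assumes "finite A" "i \<notin> A"
  shows "measure_pmf.prob (Pi_pmf (insert i A) d p) E
           = (\<Sum>y\<in>UNIV. pmf (p i) y * measure_pmf.prob (Pi_pmf A d p) ((\<lambda>f. f(i := y)) -` E))"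
proof -
  have "Pi_pmf (insert i A) d p = bind_pmf (p i) (\<lambda>y. map_pmf (\<lambda>f. f(i := y)) (Pi_pmf A d p))"
    using assms by (simp add: Pi_pmf_insert' map_pmf_def)
  then show ?thesis by (simp add: measure_pmf_prob_bind_finite)
qed

text \<open>
  Conditioning on the first step turns the level \<open>c\<close> into \<open>c - g y\<close> and \<open>L\<close> into \<open>L - 1\<close>;
  averaging the inductive bound over \<open>y\<close> contributes one factor \<open>mgf Q g l\<close>, which
  \<open>mgf Q g l \<le> 1\<close> absorbs once \<open>L = 0\<close>.
\<close>

lemma prob_crossing_event_le:
  fixes Q :: "'b::finite pmf" and ix :: "nat \<Rightarrow> 'i"
  assumes l: "0 \<le> l" and mgf_le_1: "mgf Q g l \<le> 1"
    and "finite A" "inj_on ix {..<N}" "ix ` {..<N} \<subseteq> A" "\<And>j. j < N \<Longrightarrow> p (ix j) = Q"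
  shows "measure_pmf.prob (Pi_pmf A d p) (crossing_event g ix L N c) \<le> exp (- l * c) * mgf Q g l ^ L"
  using assms(3-)
proof (induction N arbitrary: A ix c L)
  have trivial: "measure_pmf.prob D E \<le> exp (- l * c) * mgf Q g l ^ L"
    if "L = 0 \<and> c \<le> 0" for D :: "('i \<Rightarrow> 'b) pmf" and E and c :: real and L :: nat
  proof -
    have "1 \<le> exp (- l * c) * mgf Q g l ^ L" using that l by (simp add: mult_nonneg_nonpos)
    then show ?thesis using measure_pmf.prob_le_1 order_trans by blast
  qed
  {
    case 0
    show ?case
    proof (cases "L = 0 \<and> c \<le> 0")
      case True
      then show ?thesis by (rule trivial)
    next
      case False
      then show ?thesis by (simp add: crossing_event_0 mgf_nonneg)
    qed
  next
    case (Suc N)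
    show ?case
    proof (cases "L = 0 \<and> c \<le> 0")
      case True
      then show ?thesis by (rule trivial)
    next
      case False
      define A' where "A' = A - {ix 0}"
      let ?E = "crossing_event g ix L (Suc N) c"
      let ?E' = "\<lambda>y. crossing_event g (ix \<circ> Suc) (L - 1) N (c - g y)"
      have A: "A = insert (ix 0) A'" "ix 0 \<notin> A'"
        using Suc.prems(3) by (auto simp: A'_def)
      have A': "finite A'" "inj_on (ix \<circ> Suc) {..<N}" "(ix \<circ> Suc) ` {..<N} \<subseteq> A'"
        "\<And>j. j < N \<Longrightarrow> p ((ix \<circ> Suc) j) = Q"
        using Suc.prems by (auto simp: A'_def inj_on_def)
      note IH = Suc.IH[OF A']
      have "measure_pmf.prob (Pi_pmf A d p) ?E
          = (\<Sum>y\<in>UNIV. pmf Q y * measure_pmf.prob (Pi_pmf A' d p) ((\<lambda>f. f(ix 0 := y)) -` ?E))"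
        using A A'(1) Suc.prems(4)[of 0] by (simp add: measure_Pi_pmf_insert)
      also have "\<dots> \<le> (\<Sum>y\<in>UNIV. pmf Q y * measure_pmf.prob (Pi_pmf A' d p) (?E' y))"
      proof (intro sum_mono mult_left_mono)
        fix y
        show "measure_pmf.prob (Pi_pmf A' d p) ((\<lambda>f. f(ix 0 := y)) -` ?E)
            \<le> measure_pmf.prob (Pi_pmf A' d p) (?E' y)"
          by (rule measure_pmf.finite_measure_mono[OF crossing_event_fun_upd_subset[OF Suc.prems(2) False]])
             simp
      qed simp
      also have "\<dots> \<le> (\<Sum>y\<in>UNIV. pmf Q y * (exp (- l * (c - g y)) * mgf Q g l ^ (L - 1)))"
        by (intro sum_mono mult_left_mono IH pmf_nonneg)
      also have "\<dots> = exp (- l * c) * mgf Q g l ^ (L - 1) * mgf Q g l"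
        by (rule sum_pmf_exp_shift_eq_mgf)
      also have "\<dots> \<le> exp (- l * c) * mgf Q g l ^ L"
        using mgf_le_1 by (cases L) (auto simp: mgf_nonneg mult_left_le)
      finally show ?thesis .
    qed
  }
qed

lemma mgf_le_hoeffding:
  fixes Q :: "'a::finite pmf"
  assumes "0 < u" and "\<And>x. a \<le> g x" and "\<And>x. g x \<le> b"
  shows "mgf Q g u \<le> exp (u * (\<Sum>x\<in>UNIV. pmf Q x * g x) + u\<^sup>2 * (b - a)\<^sup>2 / 8)"
proof -
  interpret interval_bounded_random_variable "measure_pmf Q" g a b
    by unfold_locales (use assms in auto)
  define \<mu> where "\<mu> = (\<Sum>x\<in>UNIV. pmf Q x * g x)"
  have "measure_pmf.expectation Q g = \<mu>"
    unfolding \<mu>_def by (subst integral_measure_pmf_real[where A=UNIV]) (auto simp: mult.commute)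
  then have "(\<integral>\<^sup>+x. exp (u * (g x - \<mu>)) \<partial>Q) \<le> ennreal (exp (u\<^sup>2 * (b - a)\<^sup>2 / 8))"
    using Hoeffdings_lemma_nn_integral[OF assms(1)] by simp
  also have "(\<integral>\<^sup>+x. exp (u * (g x - \<mu>)) \<partial>Q) = ennreal (exp (- u * \<mu>) * mgf Q g u)"
    by (subst nn_integral_measure_pmf_support[where A=UNIV])
       (auto simp: mgf_def sum_distrib_left right_diff_distrib exp_diff exp_minus field_simps
             simp flip: sum_ennreal ennreal_mult')
  finally have "exp (- u * \<mu>) * mgf Q g u \<le> exp (u\<^sup>2 * (b - a)\<^sup>2 / 8)"
    by (simp add: ennreal_le_iff)
  then have "mgf Q g u \<le> exp (u * \<mu>) * exp (u\<^sup>2 * (b - a)\<^sup>2 / 8)"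
    by (simp add: exp_minus field_simps)
  then show ?thesis
    by (simp add: \<mu>_def exp_add)
qed

lemma mgf_le_hoeffding_optimal:
  fixes Q :: "'a::finite pmf"
  assumes "\<And>x. a \<le> g x" "\<And>x. g x \<le> b" "a < b" "0 < C" "(\<Sum>x\<in>UNIV. pmf Q x * g x) \<le> - C"
  shows "mgf Q g (4 * C / (b - a)\<^sup>2) \<le> exp (- 2 * C\<^sup>2 / (b - a)\<^sup>2)"
proof -
  define w where "w = (b - a)\<^sup>2"
  define u where "u = 4 * C / w"
  have w: "0 < w" unfolding w_def using assms(3) by simp
  have u: "0 < u" unfolding u_def using assms(4) w by simp
  have "mgf Q g u \<le> exp (u * (\<Sum>x\<in>UNIV. pmf Q x * g x) + u\<^sup>2 * w / 8)"
    unfolding w_def using mgf_le_hoeffding[OF u assms(1,2)] .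
  also have "\<dots> \<le> exp (- u * C + u\<^sup>2 * w / 8)"
    using mult_left_mono[OF assms(5), of u] u by simp
  also have "- u * C + u\<^sup>2 * w / 8 = - 2 * C\<^sup>2 / w"
    unfolding u_def using w by (simp add: field_simps power2_eq_square)
  finally show ?thesis unfolding u_def w_def .
qed

definition chernoff_coeff :: "'a::finite pmf \<Rightarrow> 'a pmf \<Rightarrow> real \<Rightarrow> real" where
  "chernoff_coeff P Q l = (\<Sum>x\<in>UNIV. pmf P x powr l * pmf Q x powr (1 - l))"

lemma chernoff_info_eq: "chernoff_info P Q = - (INF l\<in>{0<..<1}. ln (chernoff_coeff P Q l))"
  unfolding chernoff_info_def chernoff_coeff_def ..

lemma chernoff_coeff_le_1:
  assumes "0 \<le> l" "l \<le> 1"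
  shows "chernoff_coeff P Q l \<le> 1"
proof -
  have "pmf P x powr l * pmf Q x powr (1 - l) \<le> l * pmf P x + (1 - l) * pmf Q x" for x
    using assms Youngs_inequality_0[of l "1 - l" "pmf P x" "pmf Q x"]
    by (cases "pmf P x = 0 \<or> pmf Q x = 0") (auto simp: order.strict_iff_not)
  then have "chernoff_coeff P Q l \<le> (\<Sum>x\<in>UNIV. l * pmf P x + (1 - l) * pmf Q x)"
    unfolding chernoff_coeff_def by (rule sum_mono)
  also have "\<dots> = 1"
    by (simp add: sum.distrib flip: sum_distrib_left) (simp add: sum_pmf_eq_1)
  finally show ?thesis .
qed

locale change_point_estimator =
  fixes P0 P1 :: "'a::finite pmf" and n kstar :: nat and khat :: "(nat \<Rightarrow> 'a) \<Rightarrow> nat"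
  assumes kstar: "1 < kstar" "kstar \<le> n"
    and khat: "\<And>xs. khat xs \<in> cp_argmax n P0 P1 xs"
begin

abbreviation far :: "nat \<Rightarrow> (nat \<Rightarrow> 'a) set" where
  "far \<alpha> \<equiv> {xs. int (khat xs) \<notin> {int kstar - int \<alpha> .. int kstar + int \<alpha>}}"

abbreviation error_prob :: "nat \<Rightarrow> real" where
  "error_prob \<alpha> \<equiv> measure_pmf.prob (dataset n kstar P0 P1) (far \<alpha>)"

lemma far_eq_empty:
  assumes "n \<le> \<alpha>"
  shows "far \<alpha> = {}"
proof -
  have "int (khat xs) \<in> {int kstar - int \<alpha> .. int kstar + int \<alpha>}" for xs
    using khat[of xs] assms kstar by (auto simp: cp_argmax_def)
  then show ?thesis by blast
qed

lemma far_subset: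
  "far \<alpha> \<subseteq> crossing_event (\<lambda>x. - llr P0 P1 x) (\<lambda>j. kstar + j) (\<alpha> + 1) (n + 1 - kstar) 0
              \<union> crossing_event (llr P0 P1) (\<lambda>j. kstar - 1 - j) (\<alpha> + 1) (kstar - 1) 0"
  (is "_ \<subseteq> ?R \<union> ?L")
proof
  fix xs assume "xs \<in> far \<alpha>"
  define k where "k = khat xs"
  define Y where "Y i = llr P0 P1 (xs i)" for i
  have k: "1 \<le> k" "k \<le> n" and k_max: "(\<Sum>i=kstar..n. Y i) \<le> (\<Sum>i=k..n. Y i)"
    using khat[of xs] kstar unfolding k_def Y_def cp_argmax_def by auto
  have split: "(\<Sum>i=a..n. Y i) = (\<Sum>i=a..<b. Y i) + (\<Sum>i=b..n. Y i)" if "a \<le> b" "b \<le> n" for a b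
    using that by (simp add: sum.atLeastLessThan_concat atLeastLessThanSuc_atLeastAtMost[symmetric])
  from \<open>xs \<in> far \<alpha>\<close> have "kstar + \<alpha> < k \<or> k + \<alpha> < kstar"
    by (auto simp: k_def)
  then show "xs \<in> ?R \<union> ?L"
  proof
    assume right: "kstar + \<alpha> < k"
    have "0 \<le> (\<Sum>i=kstar..<k. - Y i)"
      using k_max split[of kstar k] right k by (simp add: sum_negf)
    also have "\<dots> = (\<Sum>j<k - kstar. - Y (kstar + j))"
      by (simp add: sum.atLeastLessThan_shift_0 atLeast0LessThan)
    finally show ?thesis
      using right k unfolding Y_def crossing_event_def by (auto intro!: exI[of _ "k - kstar"])
  next
    assume left: "k + \<alpha> < kstar"
    have "0 \<le> (\<Sum>i=k..<kstar. Y i)"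
      using k_max split[of k kstar] left kstar by simp
    also have "\<dots> = (\<Sum>j<kstar - k. Y (kstar - 1 - j))"
      using left by (simp add: sum_atLeastLessThan_rev_lessThan)
    finally show ?thesis
      using left k unfolding Y_def crossing_event_def by (auto intro!: exI[of _ "kstar - k"])
  qed
qed

lemma error_prob_le_mgf:
  assumes "0 \<le> l1" "mgf P1 (\<lambda>x. - llr P0 P1 x) l1 \<le> 1"
    and "0 \<le> l0" "mgf P0 (llr P0 P1) l0 \<le> 1"
  shows "error_prob \<alpha> \<le> mgf P1 (\<lambda>x. - llr P0 P1 x) l1 ^ (\<alpha> + 1) + mgf P0 (llr P0 P1) l0 ^ (\<alpha> + 1)"
proof -
  let ?D = "dataset n kstar P0 P1"
  let ?p = "\<lambda>i. if i < kstar then P0 else P1"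
  let ?R = "crossing_event (\<lambda>x. - llr P0 P1 x) (\<lambda>j. kstar + j) (\<alpha> + 1) (n + 1 - kstar) 0"
  let ?L = "crossing_event (llr P0 P1) (\<lambda>j. kstar - 1 - j) (\<alpha> + 1) (kstar - 1) 0"
  have D: "?D = Pi_pmf {1..n} undefined ?p"
    unfolding dataset_def ..
  have "error_prob \<alpha> \<le> measure_pmf.prob ?D (?R \<union> ?L)"
    using far_subset by (intro measure_pmf.finite_measure_mono) auto
  also have "\<dots> \<le> measure_pmf.prob ?D ?R + measure_pmf.prob ?D ?L"
    by (rule measure_Un_le) auto
  also have "measure_pmf.prob ?D ?R \<le> mgf P1 (\<lambda>x. - llr P0 P1 x) l1 ^ (\<alpha> + 1)"
  proof -
    have "inj_on (\<lambda>j. kstar + j) {..<n + 1 - kstar}" "(\<lambda>j. kstar + j) ` {..<n + 1 - kstar} \<subseteq> {1..n}"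
      "\<And>j. j < n + 1 - kstar \<Longrightarrow> ?p (kstar + j) = P1"
      using kstar by auto
    from prob_crossing_event_le[where p="?p" and L="\<alpha> + 1" and c=0,
        OF assms(1,2) finite_atLeastAtMost this]
    show ?thesis unfolding D by simp
  qed
  also have "measure_pmf.prob ?D ?L \<le> mgf P0 (llr P0 P1) l0 ^ (\<alpha> + 1)"
  proof -
    have "inj_on (\<lambda>j. kstar - 1 - j) {..<kstar - 1}" "(\<lambda>j. kstar - 1 - j) ` {..<kstar - 1} \<subseteq> {1..n}"
      "\<And>j. j < kstar - 1 \<Longrightarrow> ?p (kstar - 1 - j) = P0"
      using kstar by (auto simp: inj_on_def)
    from prob_crossing_event_le[where p="?p" and L="\<alpha> + 1" and c=0,
        OF assms(3,4) finite_atLeastAtMost this]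
    show ?thesis unfolding D by simp
  qed
  finally show ?thesis by simp
qed

end

locale change_point_model = change_point_estimator +
  assumes supp0: "set_pmf P0 = UNIV" and supp1: "set_pmf P1 = UNIV" and neq: "P0 \<noteq> P1"
begin

abbreviation llr_span :: real where
  "llr_span \<equiv> Max (range (llr P0 P1)) - Min (range (llr P0 P1))"

abbreviation KL_min :: real where
  "KL_min \<equiv> min (KL P0 P1) (KL P1 P0)"

lemma pmf_nonzero [simp]: "pmf P0 x \<noteq> 0" "pmf P1 x \<noteq> 0"
  using supp0 supp1 by (auto simp: set_pmf_iff)

lemma pmf_gt_0: "0 < pmf P0 x" "0 < pmf P1 x"
  by simp_all

lemma sum_pmf_llr:
  "(\<Sum>x\<in>UNIV. pmf P1 x * - llr P0 P1 x) = - KL P1 P0"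
  "(\<Sum>x\<in>UNIV. pmf P0 x * llr P0 P1 x) = - KL P0 P1"
  unfolding KL_def llr_def by (auto simp: ln_div algebra_simps sum_negf[symmetric] intro!: sum.cong)

lemma mgf_llr_eq_chernoff_coeff:
  "mgf P1 (\<lambda>x. - llr P0 P1 x) l = chernoff_coeff P0 P1 l"
  "mgf P0 (llr P0 P1) (1 - l) = chernoff_coeff P0 P1 l"
proof -
  have powr: "pmf P0 x powr l * pmf P1 x powr (1 - l) = exp (l * ln (pmf P0 x) + (1 - l) * ln (pmf P1 x))"
    for x by (simp add: powr_def exp_add)
  have exp_ln_add: "pmf P1 x * exp (l * - llr P0 P1 x) = exp (ln (pmf P1 x) + l * - llr P0 P1 x)"
    "pmf P0 x * exp ((1 - l) * llr P0 P1 x) = exp (ln (pmf P0 x) + (1 - l) * llr P0 P1 x)" for x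
    by (simp_all only: exp_add exp_ln pmf_gt_0)
  have exponent: "ln (pmf P1 x) + l * - llr P0 P1 x = l * ln (pmf P0 x) + (1 - l) * ln (pmf P1 x)"
    "ln (pmf P0 x) + (1 - l) * llr P0 P1 x = l * ln (pmf P0 x) + (1 - l) * ln (pmf P1 x)" for x
    by (simp_all add: llr_def ln_div algebra_simps)
  show
    "mgf P1 (\<lambda>x. - llr P0 P1 x) l = chernoff_coeff P0 P1 l"
    "mgf P0 (llr P0 P1) (1 - l) = chernoff_coeff P0 P1 l"
    unfolding mgf_def chernoff_coeff_def powr by (simp_all only: exp_ln_add exponent)
qed

lemma chernoff_coeff_pos: "0 < chernoff_coeff P0 P1 l"
  unfolding chernoff_coeff_def by (intro sum_pos) auto

lemma error_prob_le_chernoff_coeff: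
  assumes "0 < l" "l < 1"
  shows "error_prob \<alpha> \<le> 2 * chernoff_coeff P0 P1 l ^ \<alpha>"
proof -
  let ?\<rho> = "chernoff_coeff P0 P1 l"
  have \<rho>: "0 \<le> ?\<rho>" "?\<rho> \<le> 1"
    using chernoff_coeff_pos[of l] chernoff_coeff_le_1[of l] assms by auto
  have "error_prob \<alpha> \<le> ?\<rho> ^ (\<alpha> + 1) + ?\<rho> ^ (\<alpha> + 1)"
    using error_prob_le_mgf[of l "1 - l"] assms \<rho> by (simp add: mgf_llr_eq_chernoff_coeff)
  also have "\<dots> \<le> 2 * ?\<rho> ^ \<alpha>"
    using \<rho> by (simp add: mult_left_le_one_le)
  finally show ?thesis .
qed

lemma error_prob_le_exp_chernoff_info: "error_prob \<alpha> \<le> 2 * exp (- real \<alpha> * chernoff_info P0 P1)"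
proof -
  have "{0<..<1::real} \<noteq> {}" by (auto intro: exI[of _ "1 / 2"])
  moreover have "error_prob \<alpha> / 2 \<le> chernoff_coeff P0 P1 l ^ \<alpha>" if "l \<in> {0<..<1}" for l
    using error_prob_le_chernoff_coeff[of l \<alpha>] that by simp
  ultimately have "error_prob \<alpha> / 2 \<le> exp (real \<alpha> * (INF l\<in>{0<..<1}. ln (chernoff_coeff P0 P1 l)))"
    using chernoff_coeff_pos by (rule le_exp_mult_INF_ln)
  then show ?thesis by (simp add: chernoff_info_eq)
qed

lemma KL_min_pos: "0 < KL_min"
  using KL_pos[OF supp0 supp1 neq] KL_pos[OF supp1 supp0] neq by simp

lemma llr_span_pos: "0 < llr_span"
proof -
  have ex_neg: "\<exists>x. g x < 0" if "(\<Sum>x\<in>UNIV. pmf Q x * g x) < 0" for Q :: "'a pmf" and g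
  proof (rule ccontr)
    assume "\<not> (\<exists>x. g x < 0)"
    then have "0 \<le> (\<Sum>x\<in>UNIV. pmf Q x * g x)" by (intro sum_nonneg) (simp add: not_less)
    with that show False by simp
  qed
  obtain x1 where "- llr P0 P1 x1 < 0"
    using ex_neg[of P1 "\<lambda>x. - llr P0 P1 x"] sum_pmf_llr(1) KL_min_pos by auto
  moreover obtain x0 where "llr P0 P1 x0 < 0"
    using ex_neg[of P0 "llr P0 P1"] sum_pmf_llr(2) KL_min_pos by auto
  moreover have "llr P0 P1 x1 \<le> Max (range (llr P0 P1))" "Min (range (llr P0 P1)) \<le> llr P0 P1 x0"
    by simp_all
  ultimately show ?thesis by linarith
qed

lemma mgf_llr_le_hoeffding:
  "mgf P1 (\<lambda>x. - llr P0 P1 x) (4 * KL_min / llr_span\<^sup>2) \<le> exp (- 2 * KL_min\<^sup>2 / llr_span\<^sup>2)"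
  "mgf P0 (llr P0 P1) (4 * KL_min / llr_span\<^sup>2) \<le> exp (- 2 * KL_min\<^sup>2 / llr_span\<^sup>2)"
proof -
  let ?Mx = "Max (range (llr P0 P1))" and ?Mn = "Min (range (llr P0 P1))"
  have lo: "?Mn \<le> llr P0 P1 x" "- ?Mx \<le> - llr P0 P1 x" for x
    by simp_all
  have hi: "llr P0 P1 x \<le> ?Mx" "- llr P0 P1 x \<le> - ?Mn" for x
    by simp_all
  have lt: "?Mn < ?Mx" "- ?Mx < - ?Mn" and span: "- ?Mn - - ?Mx = llr_span"
    using llr_span_pos by linarith+
  have "(\<Sum>x\<in>UNIV. pmf P1 x * - llr P0 P1 x) \<le> - KL_min"
    "(\<Sum>x\<in>UNIV. pmf P0 x * llr P0 P1 x) \<le> - KL_min"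
    unfolding sum_pmf_llr by simp_all
  from mgf_le_hoeffding_optimal[OF lo(2) hi(2) lt(2) KL_min_pos this(1)]
    mgf_le_hoeffding_optimal[OF lo(1) hi(1) lt(1) KL_min_pos this(2)]
  show "mgf P1 (\<lambda>x. - llr P0 P1 x) (4 * KL_min / llr_span\<^sup>2) \<le> exp (- 2 * KL_min\<^sup>2 / llr_span\<^sup>2)"
    "mgf P0 (llr P0 P1) (4 * KL_min / llr_span\<^sup>2) \<le> exp (- 2 * KL_min\<^sup>2 / llr_span\<^sup>2)"
    by (simp_all only: span)
qed

lemma error_prob_le_hoeffding: "error_prob \<alpha> \<le> 2 * exp (- real \<alpha> * KL_min\<^sup>2 / llr_span\<^sup>2)"
proof -
  let ?q = "exp (- 2 * KL_min\<^sup>2 / llr_span\<^sup>2)"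
  have q: "0 \<le> ?q" "?q \<le> 1" by simp_all
  let ?u = "4 * KL_min / llr_span\<^sup>2"
  have u: "0 \<le> ?u" using KL_min_pos by simp
  note mgf_le = mgf_llr_le_hoeffding
  have "error_prob \<alpha> \<le> mgf P1 (\<lambda>x. - llr P0 P1 x) ?u ^ (\<alpha> + 1) + mgf P0 (llr P0 P1) ?u ^ (\<alpha> + 1)"
    using u order_trans[OF mgf_le(1) q(2)] u order_trans[OF mgf_le(2) q(2)] by (rule error_prob_le_mgf)
  also have "\<dots> \<le> ?q ^ (\<alpha> + 1) + ?q ^ (\<alpha> + 1)"
    using mgf_le by (intro add_mono power_mono mgf_nonneg)
  also have "\<dots> \<le> 2 * ?q ^ \<alpha>"
    using q by (simp add: mult_left_le_one_le)
  also have "?q ^ \<alpha> = exp (- 2 * real \<alpha> * KL_min\<^sup>2 / llr_span\<^sup>2)"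
    by (simp flip: exp_of_nat_mult)
  also have "\<dots> \<le> exp (- real \<alpha> * KL_min\<^sup>2 / llr_span\<^sup>2)"
    by (simp add: divide_right_mono)
  finally show ?thesis by simp
qed

lemma error_prob_le_geometric:
  assumes "1 \<le> \<alpha>"
  defines "t \<equiv> exp (- real \<alpha> * KL_min\<^sup>2 / llr_span\<^sup>2)"
  shows "error_prob \<alpha> \<le> 2 * (t * (1 - t ^ ((n - 1) div \<alpha>)) / (1 - t))"
proof (cases "(n - 1) div \<alpha> = 0")
  case True
  then have "n \<le> \<alpha>" using assms(1) by (simp add: div_eq_0_iff)
  then show ?thesis using True far_eq_empty by simp
next
  case False
  have "0 < real \<alpha> * KL_min\<^sup>2 / llr_span\<^sup>2"
    using assms(1) KL_min_pos llr_span_pos by (intro divide_pos_pos mult_pos_pos) auto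
  then have "t < 1" unfolding t_def by simp
  then have "t \<le> t * (1 - t ^ ((n - 1) div \<alpha>)) / (1 - t)"
    using False by (intro le_sum_geometric) (auto simp: t_def)
  then show ?thesis using error_prob_le_hoeffding[of \<alpha>] unfolding t_def by linarith
qed

end

theorem corollary3p2:
  fixes P0 P1 :: "'a::finite pmf" and n kstar alpha :: nat
    and khat :: "(nat \<Rightarrow> 'a) \<Rightarrow> nat"
  assumes supp0: "set_pmf P0 = UNIV" and supp1: "set_pmf P1 = UNIV"
    and neq: "P0 \<noteq> P1"
    and n: "n > 1" and kstar: "1 < kstar" "kstar \<le> n"
    and khat: "\<And>xs. khat xs \<in> cp_argmax n P0 P1 xs"
    and alpha: "1 \<le> alpha" "alpha \<le> n"
  shows
    "let s = Max (range (llr P0 P1)) - Min (range (llr P0 P1));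
         C = min (KL P0 P1) (KL P1 P0);
         t = exp (- real alpha * C\<^sup>2 / s\<^sup>2);
         M = (n - 1) div alpha
     in measure_pmf.prob (dataset n kstar P0 P1)
          {xs. int (khat xs) \<notin> {int kstar - int alpha .. int kstar + int alpha}}
        \<le> 2 * min (t * (1 - t ^ M) / (1 - t)) (exp (- real alpha * chernoff_info P0 P1))"
proof -
  interpret change_point_model P0 P1 n kstar khat
    by unfold_locales (use assms in auto)
  show ?thesis
    unfolding Let_def
    using error_prob_le_geometric[OF alpha(1)] error_prob_le_exp_chernoff_info[of alpha] by simp
qed

end
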